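(* Assume the setting below (missing at random). Fix $\boldsymbol\delta\in\mathbb R^n$, let $\mathcal S=\{i:M_i=1\}$, $n_{\mathcal S1}=\sum_{i\in\mathcal S}Z_i$ and $n_{\mathcal S0}=|\mathcal S|-n_{\mathcal S1}$. For $\boldsymbol z\in\{0,1\}^n$, $\boldsymbol y\in\overline{\mathbb R}^n$ let $t_{\mathrm R,\phi,\mathcal S}(\boldsymbol z,\boldsymbol y)=t_{\mathrm R,\phi}(\boldsymbol z_{\mathcal S},\boldsymbol y_{\mathcal S})$, the statistic computed on the subvectors indexed by $\mathcal S$ (original index order kept), and let $G_{\mathrm R,\phi,\mathcal S}(c)=\mathbb P(t_{\mathrm R,\phi,\mathcal S}(\boldsymbol A,\boldsymbol y_0)\ge c)$, where $\boldsymbol A_{\mathcal S}$ is uniform over assignments of the units in $\mathcal S$ with exactly $n_{\mathcal S1}$ treated (with $\mathcal S,n_{\mathcal S1}$ held fixed) and $\boldsymbol y_0\in\mathbb R^n$ is any fixed vector. Then $$p_{\boldsymbol Z,\boldsymbol\delta,\mathcal S}=G_{\mathrm R,\phi,\mathcal S}\big(t_{\mathrm R,\phi,\mathcal S}(\boldsymbol Z,\boldsymbol Y-\boldsymbol\delta\circ\boldsymbol Z)\big)$$ (which only uses the observed outcomes $Y_i$, $i\in\mathcal S$) is a valid p-value for $H_{\boldsymbol\delta}:\boldsymbol\tau=\boldsymbol\delta$: if $H_{\boldsymbol\delta}$ holds, $\mathbb P(p_{\boldsymbol Z,\boldsymbol\delta,\mathcal S}\le\alpha)\le\alpha$ for every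 $\alpha\in(0,1)$.
   Context: There are $n$ units with fixed potential outcomes $Y_i^\star(0),Y_i^\star(1)\in\mathbb R$; $\tau_i=Y_i^\star(1)-Y_i^\star(0)$, $\boldsymbol\tau=(\tau_1,\dots,\tau_n)^\intercal$. Missing at random: the potential missingness pairs $(M_i(1),M_i(0))\in\{0,1\}^2$, $1\le i\le n$, are random, i.i.d. across $i$, with $\mathbb P((M_i(1),M_i(0))=(m,m'))=p_{mm'}$ for constants $p_{11},p_{10},p_{01},p_{00}\ge0$ summing to 1 that do not depend on the potential outcomes (conditionally on the potential outcomes). The assignment $\boldsymbol Z\in\{0,1\}^n$ is from a completely randomized experiment: for fixed positive integers $n_1,n_0$ with $n_1+n_0=n$, $\boldsymbol Z$ is uniform over vectors with exactly $n_1$ ones, independently of the potential outcomes and potential missingness indicators. Observed missingness $M_i=Z_iM_i(1)+(1-Z_i)M_i(0)$; the realized outcome $Z_iY_i^\star(1)+(1-Z_i)Y_i^\star(0)$ is observed, and denoted $Y_i$, only when $M_i=1$. $\circ$ is the entrywise product. $\overline{\mathbb R}=\mathbb R\cup\{\pm\infty\}$; $\psi_{i,j}(y,y')=\mathbf 1\{y>y'\}+\mathbf 1\{y=y'\}\mathbf 1\{i\ge j\}$; $\mathrm{rank}_i(\boldsymbol y)=\sum_j\psi_{i,j}(y_i,y_j)$. $\phi$ is a fixed nondecreasing real function on the nonnegative integers. $t_{\mathrm R,\phi}(\boldsymbol z,\boldsymbol y)$ is either $\sum_i z_i\phi(\mathrm{rank}_i(\boldsymbol y))$ or $\sum_i z_i\phi\big(\sum_j(1-z_j)\psi_{i,j}(y_i,y_j)\big)$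 (sums over the units of the given vectors); the result holds for either. *)

theory Defs
  imports "HOL-Probability.Probability"
begin

(* Units are indexed 0..<n. An assignment / treated set is a set of indices (Z_i = 1 iff i in set). *)

definition psi :: "nat \<Rightarrow> nat \<Rightarrow> real \<Rightarrow> real \<Rightarrow> nat" where
  "psi i j y y' = of_bool (y > y') + of_bool (y = y') * of_bool (i \<ge> j)"

definition tRS1 :: "(nat \<Rightarrow> real) \<Rightarrow> nat set \<Rightarrow> nat set \<Rightarrow> (nat \<Rightarrow> real) \<Rightarrow> real" where
  "tRS1 phi S z y = (\<Sum>i\<in>S. of_bool (i \<in> z) * phi (\<Sum>j\<in>S. psi i j (y i) (y j)))"

definition tRS2 :: "(nat \<Rightarrow> real) \<Rightarrow> nat set \<Rightarrow> nat set \<Rightarrow> (nat \<Rightarrow> real) \<Rightarrow> real" where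
  "tRS2 phi S z y = (\<Sum>i\<in>S. of_bool (i \<in> z) * phi (\<Sum>j\<in>S. of_bool (j \<notin> z) * psi i j (y i) (y j)))"

definition assignments :: "nat set \<Rightarrow> nat \<Rightarrow> nat set set" where
  "assignments S m = {A. A \<subseteq> S \<and> card A = m}"

definition G :: "(nat set \<Rightarrow> nat set \<Rightarrow> (nat \<Rightarrow> real) \<Rightarrow> real) \<Rightarrow> (nat \<Rightarrow> real)
                 \<Rightarrow> nat set \<Rightarrow> nat \<Rightarrow> real \<Rightarrow> real" where
  "G stat y0 S m c = measure_pmf.prob (pmf_of_set (assignments S m)) {A. stat S A y0 \<ge> c}"

(* observed missingness indicator M_i = Z_i M_i(1) + (1-Z_i) M_i(0); MM i = (M_i(1), M_i(0)) *)
definition obsM :: "nat set \<Rightarrow> (nat \<Rightarrow> bool \<times> bool) \<Rightarrow> nat \<Rightarrow> bool" where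
  "obsM T MM i = (if i \<in> T then fst (MM i) else snd (MM i))"

definition obsY :: "nat set \<Rightarrow> (nat \<Rightarrow> real) \<Rightarrow> (nat \<Rightarrow> real) \<Rightarrow> nat \<Rightarrow> real" where
  "obsY T Y1 Y0 i = (if i \<in> T then Y1 i else Y0 i)"

definition pval :: "(nat set \<Rightarrow> nat set \<Rightarrow> (nat \<Rightarrow> real) \<Rightarrow> real) \<Rightarrow> (nat \<Rightarrow> real) \<Rightarrow> nat
     \<Rightarrow> (nat \<Rightarrow> real) \<Rightarrow> (nat \<Rightarrow> real) \<Rightarrow> (nat \<Rightarrow> real) \<Rightarrow> nat set \<Rightarrow> (nat \<Rightarrow> bool \<times> bool) \<Rightarrow> real" where
  "pval stat y0 n Y1 Y0 delta T MM =
     (let S = {i. i < n \<and> obsM T MM i}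
      in G stat y0 S (card (S \<inter> T))
           (stat S T (\<lambda>i. obsY T Y1 Y0 i - delta i * of_bool (i \<in> T))))"

end

theory Submission
  imports Defs "HOL-Combinatorics.Permutations"
begin

(*
  Under the null hypothesis the adjusted outcomes Y - delta o Z are the control outcomes Y(0),
  so the p-value is G_S evaluated at the statistic of (Z restricted to S, Y(0)).  Both rank
  statistics see an outcome vector only through the linear order it induces on S (ties broken
  by index); any two linear orders on S are isomorphic, and transporting assignments along the
  isomorphism shows that G_S does not depend on the outcome vector.  The design and the i.i.d.
  missingness are invariant under relabelling the units, so, given S and n_S1, the treated set
  Z restricted to S is uniform over the subsets of S of that size.  Conditionally, the p-value
  is therefore the randomization p-value of a uniformly drawn assignment, which is
  super-uniform: at most an alpha fraction of assignments have at most an alpha fraction of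
  assignments with a statistic at least as large.
*)

definition outcome_order :: "(nat \<Rightarrow> real) \<Rightarrow> nat set \<Rightarrow> nat rel" where
  "outcome_order y s = {(j, i) \<in> s \<times> s. y j < y i \<or> y j = y i \<and> j \<le> i}"

lemma psi_outcome_order:
  "i \<in> s \<Longrightarrow> j \<in> s \<Longrightarrow> psi i j (y i) (y j) = of_bool ((j, i) \<in> outcome_order y s)"
  unfolding psi_def outcome_order_def by auto

lemma linear_order_on_outcome_order: "linear_order_on s (outcome_order y s)"
  unfolding outcome_order_def order_on_defs refl_on_def trans_def antisym_def total_on_def
  by auto

lemma finite_linear_order_iso:
  assumes "finite A" "linear_order_on A r" "linear_order_on A r'"
  obtains f where "bij_betw f A A" "\<And>a b. a \<in> A \<Longrightarrow> b \<in> A \<Longrightarrow> (a, b) \<in> r \<longleftrightarrow> (f a, f b) \<in> r'"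
proof -
  have "finite r" "finite r'"
    using assms finite_subset[of _ "A \<times> A"] unfolding order_on_defs by auto
  then have wo: "well_order_on A r" "well_order_on A r'"
    using assms linear_order_on_well_order_on by blast+
  then obtain f where "iso r r' f"
    using finite_well_order_on_ordIso[OF assms(1)] unfolding ordIso_def by blast
  moreover have "Field r = A" "Field r' = A"
    using wo well_order_on_Field by metis+
  ultimately show thesis
    using that iso_iff2 by metis
qed

lemma rank_stat_reindex:
  assumes stat: "stat = tRS1 phi \<or> stat = tRS2 phi" and h: "bij_betw h s s"
    and psi: "\<And>i j. i \<in> s \<Longrightarrow> j \<in> s \<Longrightarrow> psi (h i) (h j) (y' (h i)) (y' (h j)) = psi i j (y i) (y j)"
    and z: "\<And>i. i \<in> s \<Longrightarrow> h i \<in> z' \<longleftrightarrow> i \<in> z"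
  shows "stat s z' y' = stat s z y"
proof -
  have reindex: "sum g s = (\<Sum>i\<in>s. g (h i))" for g :: "nat \<Rightarrow> 'b::comm_monoid_add"
    by (rule sum.reindex_bij_betw[OF h, symmetric])
  have "(\<Sum>j\<in>s. w (j \<in> z') * psi (h i) j (y' (h i)) (y' j))
      = (\<Sum>j\<in>s. w (j \<in> z) * psi i j (y i) (y j))" if "i \<in> s" for i and w :: "bool \<Rightarrow> nat"
    using reindex[of "\<lambda>j. w (j \<in> z') * psi (h i) j (y' (h i)) (y' j)"] that
    by (simp add: psi z)
  \<comment> \<open>tRS1 and tRS2 are the instances w b = 1 and w b = of_bool (\<not> b) of this weighted statistic.\<close>
  then have weighted: "(\<Sum>i\<in>s. of_bool (i \<in> z') * phi (\<Sum>j\<in>s. w (j \<in> z') * psi i j (y' i) (y' j)))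
      = (\<Sum>i\<in>s. of_bool (i \<in> z) * phi (\<Sum>j\<in>s. w (j \<in> z) * psi i j (y i) (y j)))"
    for w :: "bool \<Rightarrow> nat"
    using reindex[of "\<lambda>i. of_bool (i \<in> z') * phi (\<Sum>j\<in>s. w (j \<in> z') * psi i j (y' i) (y' j))"]
    by (auto simp: z intro!: sum.cong)
  show ?thesis
    using stat weighted[of "\<lambda>_. 1"] weighted[of "\<lambda>b. of_bool (\<not> b)"]
    unfolding tRS1_def tRS2_def by auto
qed

lemma finite_assignments: "finite s \<Longrightarrow> finite (assignments s m)"
  unfolding assignments_def by (rule finite_subset[of _ "Pow s"]) auto

lemma assignments_nonempty: "finite s \<Longrightarrow> m \<le> card s \<Longrightarrow> assignments s m \<noteq> {}"
  unfolding assignments_def by (auto dest: obtain_subset_with_card_n)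

lemma image_assignments_subset:
  assumes "bij_betw h s s"
  shows "image h ` assignments s m \<subseteq> assignments s m"
  using assms bij_betw_imp_inj_on[OF assms]
  by (auto simp: assignments_def bij_betw_def card_image inj_on_subset)

lemma image_assignments:
  assumes "bij_betw h s s"
  shows "image h ` assignments s m = assignments s m"
proof
  show "image h ` assignments s m \<subseteq> assignments s m"
    using assms by (rule image_assignments_subset)
  show "assignments s m \<subseteq> image h ` assignments s m"
  proof
    fix B assume B: "B \<in> assignments s m"
    have "inv_into s h ` B \<in> assignments s m"
      using image_assignments_subset[OF bij_betw_inv_into[OF assms]] B by blast
    moreover have "B = h ` inv_into s h ` B"
      using B assms by (simp add: assignments_def bij_betw_def image_inv_into_cancel)
    ultimately show "B \<in> image h ` assignments s m" by blast
  qed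
qed

lemma map_pmf_image_assignments:
  assumes "finite s" "m \<le> card s" "bij_betw h s s"
  shows "map_pmf (image h) (pmf_of_set (assignments s m)) = pmf_of_set (assignments s m)"
proof -
  have "inj_on (image h) (assignments s m)"
    using bij_betw_imp_inj_on[OF assms(3)]
    by (auto simp: inj_on_def assignments_def inj_on_image_eq_iff)
  then show ?thesis
    using assms by (simp add: map_pmf_of_set_inj finite_assignments assignments_nonempty image_assignments)
qed

lemma obtain_rank_stat_iso:
  assumes "finite s" and stat: "stat = tRS1 phi \<or> stat = tRS2 phi"
  obtains h where "bij_betw h s s" "\<And>A. A \<subseteq> s \<Longrightarrow> stat s (h ` A) y' = stat s A y"
proof -
  obtain h where h: "bij_betw h s s"
    and order: "\<And>i j. i \<in> s \<Longrightarrow> j \<in> s \<Longrightarrow> (i, j) \<in> outcome_order y s \<longleftrightarrow> (h i, h j) \<in> outcome_order y' s"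
    using finite_linear_order_iso[OF assms(1) linear_order_on_outcome_order[of s y] linear_order_on_outcome_order[of s y']] by blast
  have "stat s (h ` A) y' = stat s A y" if "A \<subseteq> s" for A
  proof (rule rank_stat_reindex[OF stat h])
    fix i j assume "i \<in> s" "j \<in> s"
    then show "psi (h i) (h j) (y' (h i)) (y' (h j)) = psi i j (y i) (y j)"
      using h order by (simp add: psi_outcome_order bij_betwE)
  next
    fix i assume "i \<in> s"
    then show "h i \<in> h ` A \<longleftrightarrow> i \<in> A"
      using that inj_on_image_mem_iff[OF bij_betw_imp_inj_on[OF h]] by blast
  qed
  with h that show thesis by blast
qed

lemma G_outcome_invariant:
  assumes "finite s" "m \<le> card s" and stat: "stat = tRS1 phi \<or> stat = tRS2 phi"
  shows "G stat y s m c = G stat y' s m c"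
proof -
  obtain h where h: "bij_betw h s s" and iso: "\<And>A. A \<subseteq> s \<Longrightarrow> stat s (h ` A) y' = stat s A y"
    using obtain_rank_stat_iso[OF assms(1) stat, of y' y] by blast
  let ?U = "pmf_of_set (assignments s m)"
  have support: "set_pmf ?U = assignments s m"
    using assms by (simp add: finite_assignments assignments_nonempty)
  have "G stat y' s m c = measure_pmf.prob (map_pmf (image h) ?U) {A. c \<le> stat s A y'}"
    unfolding G_def map_pmf_image_assignments[OF assms(1,2) h] ..
  also have "\<dots> = measure_pmf.prob ?U ({A. c \<le> stat s (h ` A) y'} \<inter> set_pmf ?U)"
    by (simp add: measure_Int_set_pmf vimage_def)
  also have "{A. c \<le> stat s (h ` A) y'} \<inter> set_pmf ?U = {A. c \<le> stat s A y} \<inter> set_pmf ?U"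
    unfolding support by (auto simp: assignments_def iso)
  finally show ?thesis
    by (simp add: G_def measure_Int_set_pmf)
qed

lemma card_small_upper_tail_le:
  fixes f :: "'a \<Rightarrow> 'b::linorder"
  assumes "finite X" "0 \<le> \<alpha>"
  shows "real (card {a\<in>X. real (card {b\<in>X. f a \<le> f b}) \<le> \<alpha> * real (card X)}) \<le> \<alpha> * real (card X)"
    (is "real (card ?Y) \<le> _")
proof (cases "?Y = {}")
  case True
  show ?thesis unfolding True using assms by simp
next
  case False
  have "finite ?Y" using assms(1) by simp
  then have "Min (f ` ?Y) \<in> f ` ?Y" "\<And>a. a \<in> ?Y \<Longrightarrow> Min (f ` ?Y) \<le> f a"
    using False by simp_all
  then obtain a0 where a0: "a0 \<in> ?Y" "\<And>a. a \<in> ?Y \<Longrightarrow> f a0 \<le> f a"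
    by force
  then have "card ?Y \<le> card {b\<in>X. f a0 \<le> f b}"
    using assms(1) by (intro card_mono) auto
  moreover have "real (card {b\<in>X. f a0 \<le> f b}) \<le> \<alpha> * real (card X)"
    using a0 by blast
  ultimately show ?thesis by linarith
qed

lemma measure_pmf_le_if_uniform_on_fibres:
  fixes R :: "'a pmf" and \<kappa> :: "'a \<Rightarrow> 'k"
  assumes "finite D" "set_pmf R \<subseteq> D" "0 \<le> \<alpha>"
    and uniform: "\<And>x y. x \<in> D \<Longrightarrow> y \<in> D \<Longrightarrow> \<kappa> x = \<kappa> y \<Longrightarrow> pmf R x = pmf R y"
    and sparse: "\<And>x. x \<in> D \<Longrightarrow> real (card {y\<in>D \<inter> E. \<kappa> y = \<kappa> x}) \<le> \<alpha> * real (card {y\<in>D. \<kappa> y = \<kappa> x})"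
  shows "measure_pmf.prob R E \<le> \<alpha>"
proof -
  have fibre: "(\<Sum>y\<in>{y\<in>D \<inter> E. \<kappa> y = k}. pmf R y) \<le> \<alpha> * (\<Sum>y\<in>{y\<in>D. \<kappa> y = k}. pmf R y)"
    if k: "k \<in> \<kappa> ` D" for k
  proof -
    obtain x where x: "x \<in> D" "\<kappa> x = k" using k by blast
    have "(\<Sum>y\<in>{y\<in>D \<inter> E. \<kappa> y = k}. pmf R y) = (\<Sum>y\<in>{y\<in>D \<inter> E. \<kappa> y = \<kappa> x}. pmf R x)"
      using x by (intro sum.cong) (auto intro: uniform)
    also have "\<dots> = real (card {y\<in>D \<inter> E. \<kappa> y = \<kappa> x}) * pmf R x"
      by simp
    also have "\<dots> \<le> \<alpha> * real (card {y\<in>D. \<kappa> y = \<kappa> x}) * pmf R x"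
      using sparse[OF x(1)] by (simp add: mult_right_mono)
    also have "\<dots> = \<alpha> * (\<Sum>y\<in>{y\<in>D. \<kappa> y = \<kappa> x}. pmf R x)"
      by simp
    also have "\<dots> = \<alpha> * (\<Sum>y\<in>{y\<in>D. \<kappa> y = k}. pmf R y)"
      using x by (intro arg_cong[where f = "(*) \<alpha>"] sum.cong) (auto intro: uniform)
    finally show ?thesis .
  qed
  have "measure_pmf.prob R E = measure_pmf.prob R (E \<inter> set_pmf R)"
    by (simp add: measure_Int_set_pmf)
  also have "E \<inter> set_pmf R = (D \<inter> E) \<inter> set_pmf R"
    using assms(2) by blast
  also have "measure_pmf.prob R \<dots> = measure_pmf.prob R (D \<inter> E)"
    by (simp add: measure_Int_set_pmf)
  also have "\<dots> = (\<Sum>y\<in>D \<inter> E. pmf R y)"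
    using assms(1) by (simp add: measure_measure_pmf_finite)
  also have "\<dots> = (\<Sum>k\<in>\<kappa> ` D. \<Sum>y\<in>{y\<in>D \<inter> E. \<kappa> y = k}. pmf R y)"
    by (rule sum.group[symmetric]) (use assms(1) in auto)
  also have "\<dots> \<le> (\<Sum>k\<in>\<kappa> ` D. \<alpha> * (\<Sum>y\<in>{y\<in>D. \<kappa> y = k}. pmf R y))"
    using fibre by (rule sum_mono)
  also have "\<dots> = \<alpha> * (\<Sum>y\<in>D. pmf R y)"
    unfolding sum_distrib_left[symmetric] by (subst sum.group) (use assms(1) in auto)
  also have "\<dots> = \<alpha> * measure_pmf.prob R D"
    using assms(1) by (simp add: measure_measure_pmf_finite)
  also have "\<dots> \<le> \<alpha>"
    using assms(3) by (simp add: mult_left_le)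
  finally show ?thesis .
qed

lemma G_eq_card_ratio:
  assumes "finite s" "m \<le> card s"
  shows "G stat y s m c = real (card {A\<in>assignments s m. c \<le> stat s A y}) / real (card (assignments s m))"
  using assms unfolding G_def
  by (simp add: measure_pmf_of_set finite_assignments assignments_nonempty Int_def)

lemma G_pvalue_valid_if_exchangeable:
  fixes R :: "(nat set \<times> nat set) pmf"
  assumes "finite N" and support: "set_pmf R \<subseteq> {(s, a). a \<subseteq> s \<and> s \<subseteq> N}" and "0 \<le> \<alpha>"
    and exchangeable: "\<And>s a a'. s \<subseteq> N \<Longrightarrow> a \<subseteq> s \<Longrightarrow> a' \<subseteq> s \<Longrightarrow> card a = card a' \<Longrightarrow> pmf R (s, a) = pmf R (s, a')"
  shows "measure_pmf.prob R {(s, a). G stat y s (card a) (stat s a y) \<le> \<alpha>} \<le> \<alpha>"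
proof -
  define D where "D = {(s, a). a \<subseteq> s \<and> s \<subseteq> N}"
  define E where "E = {(s, a). G stat y s (card a) (stat s a y) \<le> \<alpha>}"
  define \<kappa> :: "nat set \<times> nat set \<Rightarrow> nat set \<times> nat" where "\<kappa> = (\<lambda>(s, a). (s, card a))"
  have "finite D"
    unfolding D_def by (rule finite_subset[of _ "Pow N \<times> Pow N"]) (use \<open>finite N\<close> in auto)
  moreover have "pmf R x = pmf R x'" if "x \<in> D" "x' \<in> D" "\<kappa> x = \<kappa> x'" for x x'
    using that unfolding D_def \<kappa>_def by (auto split: prod.splits intro!: exchangeable)
  moreover have "real (card {x'\<in>D \<inter> E. \<kappa> x' = \<kappa> x}) \<le> \<alpha> * real (card {x'\<in>D. \<kappa> x' = \<kappa> x})"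
    if "x \<in> D" for x
  proof -
    obtain s a where "x = (s, a)" by (cases x)
    with that have x: "x = (s, a)" "a \<subseteq> s" "s \<subseteq> N" unfolding D_def by auto
    have fs: "finite s" using x(3) \<open>finite N\<close> by (rule finite_subset)
    define X where "X = assignments s (card a)"
    have "X \<noteq> {}" "finite X"
      unfolding X_def using fs x(2) by (simp_all add: assignments_nonempty finite_assignments card_mono)
    have fibre: "{x'\<in>D. \<kappa> x' = \<kappa> x} = Pair s ` X"
      unfolding X_def assignments_def D_def \<kappa>_def using x by auto
    have "G stat y s (card b) (stat s b y) = real (card {A\<in>X. stat s b y \<le> stat s A y}) / real (card X)"
      if "b \<in> X" for b
      using that G_eq_card_ratio[OF fs, of "card a"] x(2) fs unfolding X_def assignments_def
      by (simp add: card_mono)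
    moreover have "real (card X) > 0"
      using \<open>X \<noteq> {}\<close> \<open>finite X\<close> by (simp add: card_gt_0_iff)
    ultimately have "Pair s ` X \<inter> E = Pair s ` {b\<in>X. real (card {A\<in>X. stat s b y \<le> stat s A y}) \<le> \<alpha> * real (card X)}"
      unfolding E_def by (auto simp: pos_divide_le_eq)
    moreover have "{x'\<in>D \<inter> E. \<kappa> x' = \<kappa> x} = {x'\<in>D. \<kappa> x' = \<kappa> x} \<inter> E"
      by blast
    ultimately show ?thesis
      using card_small_upper_tail_le[OF \<open>finite X\<close> \<open>0 \<le> \<alpha>\<close>, of "\<lambda>b. stat s b y"]
      unfolding fibre by (simp add: card_image inj_on_def)
  qed
  ultimately show ?thesis
    using measure_pmf_le_if_uniform_on_fibres[OF _ support[folded D_def] \<open>0 \<le> \<alpha>\<close>, of \<kappa> E]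
    unfolding E_def by blast
qed

lemma obtain_permutes_image:
  assumes "finite s" "a \<subseteq> s" "b \<subseteq> s" "card a = card b"
  obtains \<pi> where "\<pi> permutes s" "\<pi> ` a = b"
proof -
  obtain f where f: "bij_betw f a b"
    using assms finite_same_card_bij finite_subset by metis
  have "card (s - a) = card (s - b)"
    using assms by (simp add: card_Diff_subset finite_subset)
  then obtain g where g: "bij_betw g (s - a) (s - b)"
    using assms finite_same_card_bij by (metis finite_Diff)
  define \<pi> where "\<pi> x = (if x \<in> a then f x else if x \<in> s then g x else x)" for x
  have "bij_betw \<pi> a b"
    using f by (rule bij_betw_cong[THEN iffD1, rotated]) (simp add: \<pi>_def)
  moreover have "bij_betw \<pi> (s - a) (s - b)"
    using g by (rule bij_betw_cong[THEN iffD1, rotated]) (simp add: \<pi>_def)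
  ultimately have "bij_betw \<pi> (a \<union> (s - a)) (b \<union> (s - b))"
    by (rule bij_betw_combine) blast
  then have "\<pi> permutes s"
    using assms by (intro bij_imp_permutes) (auto simp: Un_absorb1 \<pi>_def)
  moreover have "\<pi> ` a = b"
    using \<open>bij_betw \<pi> a b\<close> by (simp add: bij_betw_def)
  ultimately show thesis by (rule that)
qed

definition observed_units :: "nat \<Rightarrow> nat set \<Rightarrow> (nat \<Rightarrow> bool \<times> bool) \<Rightarrow> nat set" where
  "observed_units n T MM = {i. i < n \<and> obsM T MM i}"

lemma observed_units_permute:
  assumes "\<pi> permutes {..<n}"
  shows "observed_units n (\<pi> ` T) (MM \<circ> inv \<pi>) = \<pi> ` observed_units n T MM"
proof -
  have "obsM (\<pi> ` T) (MM \<circ> inv \<pi>) (\<pi> j) = obsM T MM j" for j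
    using permutes_inj[OF assms] by (simp add: obsM_def inj_image_mem_iff permutes_inverses(2)[OF assms])
  moreover have "\<pi> j < n \<longleftrightarrow> j < n" for j
    using permutes_in_image[OF assms] by simp
  moreover have "i = \<pi> (inv \<pi> i)" for i
    using permutes_inverses(1)[OF assms] by simp
  ultimately show ?thesis
    unfolding observed_units_def by (auto simp: image_iff) metis
qed

lemma design_permutation_invariant:
  assumes "\<pi> permutes {..<n}" "n1 \<le> n"
  shows "map_pmf (\<lambda>(T, MM). (\<pi> ` T, MM \<circ> inv \<pi>))
           (pair_pmf (pmf_of_set (assignments {..<n} n1)) (Pi_pmf {..<n} d (\<lambda>_. p)))
       = pair_pmf (pmf_of_set (assignments {..<n} n1)) (Pi_pmf {..<n} d (\<lambda>_. p))"
proof -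
  have "map_pmf (image \<pi>) (pmf_of_set (assignments {..<n} n1)) = pmf_of_set (assignments {..<n} n1)"
    using assms by (intro map_pmf_image_assignments permutes_imp_bij) auto
  moreover have "map_pmf (\<lambda>MM. MM \<circ> inv \<pi>) (Pi_pmf {..<n} d (\<lambda>_. p)) = Pi_pmf {..<n} d (\<lambda>_. p)"
    using permutes_inv[OF assms(1)]
    by (intro Pi_pmf_bij_betw[symmetric] permutes_imp_bij) (auto simp: permutes_not_in)
  ultimately show ?thesis
    by (simp add: map_pair)
qed

lemma observed_assignment_exchangeable:
  fixes n n1 :: nat and d :: "bool \<times> bool" and p :: "(bool \<times> bool) pmf"
  defines "R \<equiv> map_pmf (\<lambda>(T, MM). (observed_units n T MM, T \<inter> observed_units n T MM))
                 (pair_pmf (pmf_of_set (assignments {..<n} n1)) (Pi_pmf {..<n} d (\<lambda>_. p)))"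
  assumes "n1 \<le> n" and s: "s \<subseteq> {..<n}" and "a \<subseteq> s" "a' \<subseteq> s" "card a = card a'"
  shows "pmf R (s, a) = pmf R (s, a')"
proof -
  obtain \<pi> where \<pi>: "\<pi> permutes s" "\<pi> ` a = a'"
    using obtain_permutes_image[of s a a'] assms finite_subset[OF s] by blast
  have \<pi>n: "\<pi> permutes {..<n}"
    using permutes_subset[OF \<pi>(1) s] .
  define \<Gamma> where "\<Gamma> = (\<lambda>(s, a). (\<pi> ` s, \<pi> ` a))"
  have "inj \<Gamma>"
    using permutes_inj[OF \<pi>(1)] by (auto simp: inj_def \<Gamma>_def inj_image_eq_iff)
  have "map_pmf \<Gamma> R = R"
  proof -
    have "\<Gamma> (observed_units n T MM, T \<inter> observed_units n T MM)
        = (observed_units n (\<pi> ` T) (MM \<circ> inv \<pi>), \<pi> ` T \<inter> observed_units n (\<pi> ` T) (MM \<circ> inv \<pi>))"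
      for T MM
      using permutes_inj[OF \<pi>(1)] by (simp add: \<Gamma>_def observed_units_permute[OF \<pi>n] image_Int)
    then show ?thesis
      unfolding R_def map_pmf_comp
      by (subst (2) design_permutation_invariant[OF \<pi>n \<open>n1 \<le> n\<close>, symmetric])
         (simp add: map_pmf_comp case_prod_beta)
  qed
  then have "pmf R (\<Gamma> (s, a)) = pmf R (s, a)"
    using pmf_map_inj'[OF \<open>inj \<Gamma>\<close>] by metis
  moreover have "\<Gamma> (s, a) = (s, a')"
    using \<pi> permutes_image by (simp add: \<Gamma>_def)
  ultimately show ?thesis by simp
qed

lemma pval_eq_G_control_outcomes:
  fixes T :: "nat set" and MM :: "nat \<Rightarrow> bool \<times> bool"
  assumes stat: "stat = tRS1 phi \<or> stat = tRS2 phi" and null: "\<forall>i<n. Y1 i - Y0 i = delta i"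
  defines "S \<equiv> observed_units n T MM"
  shows "pval stat y0 n Y1 Y0 delta T MM = G stat Y0 S (card (T \<inter> S)) (stat S (T \<inter> S) Y0)"
proof -
  have "S \<subseteq> {..<n}" "finite S"
    unfolding S_def observed_units_def by (auto intro: finite_subset)
  have adjusted: "obsY T Y1 Y0 i - delta i * of_bool (i \<in> T) = Y0 i" if "i \<in> S" for i
    using that \<open>S \<subseteq> {..<n}\<close> null by (auto simp: obsY_def)
  have "stat S T (\<lambda>i. obsY T Y1 Y0 i - delta i * of_bool (i \<in> T)) = stat S (T \<inter> S) Y0"
    by (rule rank_stat_reindex[OF stat bij_betw_id]) (auto simp: adjusted)
  moreover have "G stat y0 S (card (T \<inter> S)) c = G stat Y0 S (card (T \<inter> S)) c" for c
    using \<open>finite S\<close> by (intro G_outcome_invariant[OF _ _ stat] card_mono) auto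
  ultimately show ?thesis
    unfolding pval_def S_def observed_units_def by (simp add: Let_def Int_commute)
qed

theorem theorem5:
  fixes n n1 :: nat
    and Y1 Y0 delta y0 phi :: "nat \<Rightarrow> real"
    and p :: "(bool \<times> bool) pmf"
    and stat :: "nat set \<Rightarrow> nat set \<Rightarrow> (nat \<Rightarrow> real) \<Rightarrow> real"
    and alpha :: real
  assumes "0 < n1" and "n1 < n"
    and "mono phi"
    and "stat = tRS1 phi \<or> stat = tRS2 phi"
    and "\<forall>i<n. Y1 i - Y0 i = delta i"
    and "0 < alpha" and "alpha < 1"
  shows "measure_pmf.prob
           (pair_pmf (pmf_of_set (assignments {..<n} n1)) (Pi_pmf {..<n} (False, False) (\<lambda>_. p)))
           {(T, MM). pval stat y0 n Y1 Y0 delta T MM \<le> alpha} \<le> alpha"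
proof -
  define L where "L = pair_pmf (pmf_of_set (assignments {..<n} n1)) (Pi_pmf {..<n} (False, False) (\<lambda>_. p))"
  define \<Phi> where "\<Phi> = (\<lambda>(T, MM). (observed_units n T MM, T \<inter> observed_units n T MM))"
  have "{(T, MM). pval stat y0 n Y1 Y0 delta T MM \<le> alpha}
      = \<Phi> -` {(s, a). G stat Y0 s (card a) (stat s a Y0) \<le> alpha}"
    unfolding \<Phi>_def by (auto simp: pval_eq_G_control_outcomes[OF assms(4,5)] Int_commute)
  then have "measure_pmf.prob L {(T, MM). pval stat y0 n Y1 Y0 delta T MM \<le> alpha}
      = measure_pmf.prob (map_pmf \<Phi> L) {(s, a). G stat Y0 s (card a) (stat s a Y0) \<le> alpha}"
    by simp
  also have "\<dots> \<le> alpha"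
  proof (rule G_pvalue_valid_if_exchangeable[of "{..<n}"])
    show "set_pmf (map_pmf \<Phi> L) \<subseteq> {(s, a). a \<subseteq> s \<and> s \<subseteq> {..<n}}"
      unfolding \<Phi>_def observed_units_def by auto
    show "pmf (map_pmf \<Phi> L) (s, a) = pmf (map_pmf \<Phi> L) (s, a')"
      if "s \<subseteq> {..<n}" "a \<subseteq> s" "a' \<subseteq> s" "card a = card a'" for s a a'
      unfolding \<Phi>_def L_def using assms(2) that by (intro observed_assignment_exchangeable) auto
  qed (use assms(6) in auto)
  finally show ?thesis
    unfolding L_def .
qed

end
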